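(* Let $\mathcal{P}$ be a finite nonempty set of stochastic trees and $\Pi=(G,\{[s]\}_{s\in S_\mathcal{P}})$ a stochastic partition of $S_\mathcal{P}$. Then the quotient $\mathcal{P}/\Pi$ is a well-defined LPTS; that is, for every transition $(g,a,\mu)$ of $\mathcal{P}/\Pi$, $\mu$ is a probability distribution on $G$.
   Context: $\mathrm{Dist}(S)$ is the set of discrete probability distributions on $S$ (rational probabilities), $\delta_g$ the Dirac distribution on $g$. An LPTS is $\langle S,s^0,\alpha,\tau\rangle$ with finite $S$, start $s^0$, finite actions $\alpha$, finite $\tau\subseteq S\times\alpha\times\mathrm{Dist}(S)$; write $s\xrightarrow{a}\mu$. A stochastic tree is an LPTS whose start state is in the support of no transition's distribution and each other state is in the support of exactly one transition's distribution; for a non-start state $s$, $\mathrm{parent}(s)$ is the source state of that unique transition. $S_\mathcal{P}$ is the (disjoint) union of the state sets of the trees in $\mathcal{P}$. A stochastic partition of $S_\mathcal{P}$ is a pair $(G,\{[s]\}_{s\in S_\mathcal{P}})$ with $G\subseteq 2^{S_\mathcal{P}}$, $\bigcup G=S_\mathcal{P}$, and each $[s]$ a partial function $G\to\mathrm{Dist}(G)$ (with the convention $[s](g')(g)=0$ for all $g$ when $[s](g')$ is undefined), such that: (1) there is $g^0\in G$ with $[s^0_P](g)=\delta_{g^0}$ for every $P\in\mathcal{P}$ and every $g\in G$; (2) for every non-start state $s$ and $g\in G$, $[s](g)$ is defined iff $[\mathrm{parent}(s)](g')(g)>0$ for some $g'\in G$; and moreover for all $s\in S_\mathcal{P}$,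 $g\in G$: $s\in g$ iff $[s](g')(g)>0$ for some $g'\in G$. The quotient $\mathcal{P}/\Pi$ has states $G$, start state $g^0$, actions $\bigcup_{P\in\mathcal{P}}\alpha_P$, and $(g,a,\mu)$ is a transition iff some $P\in\mathcal{P}$ has a transition $s\xrightarrow{a}\mu_p$ with $s\in g$ and, for every $g'\in G$, $\mu(g')=\sum_{s'\in g'}[s'](g)(g')\cdot\mu_p(s')$. *)

theory Defs
  imports Complex_Main
begin

definition is_dist :: "'x set \<Rightarrow> ('x \<Rightarrow> rat) \<Rightarrow> bool" where
  "is_dist S \<mu> \<longleftrightarrow> (\<forall>x. 0 \<le> \<mu> x) \<and> (\<forall>x. x \<notin> S \<longrightarrow> \<mu> x = 0) \<and> sum \<mu> S = 1"

definition dirac :: "'x \<Rightarrow> 'x \<Rightarrow> rat" where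
  "dirac g = (\<lambda>h. if h = g then 1 else 0)"

record ('s, 'a) lpts =
  st  :: "'s set"
  s0  :: 's
  act :: "'a set"
  tr  :: "('s \<times> 'a \<times> ('s \<Rightarrow> rat)) set"

definition is_lpts :: "('s, 'a) lpts \<Rightarrow> bool" where
  "is_lpts L \<longleftrightarrow> finite (st L) \<and> s0 L \<in> st L \<and> finite (act L) \<and> finite (tr L) \<and>
     (\<forall>(s, a, \<mu>) \<in> tr L. s \<in> st L \<and> a \<in> act L \<and> is_dist (st L) \<mu>)"

definition stochastic_tree :: "('s, 'a) lpts \<Rightarrow> bool" where
  "stochastic_tree L \<longleftrightarrow> is_lpts L \<and>
     (\<forall>(s, a, \<mu>) \<in> tr L. \<not> (\<mu> (s0 L) > 0)) \<and>
     (\<forall>t \<in> st L - {s0 L}. \<exists>!x. x \<in> tr L \<and> snd (snd x) t > 0)"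

definition parent :: "('s, 'a) lpts \<Rightarrow> 's \<Rightarrow> 's" where
  "parent L t = fst (THE x. x \<in> tr L \<and> snd (snd x) t > 0)"

text \<open>States of the disjoint union are tagged with the tree they come from.\<close>
definition SP :: "('s, 'a) lpts set \<Rightarrow> (('s, 'a) lpts \<times> 's) set" where
  "SP \<P> = {(P, s). P \<in> \<P> \<and> s \<in> st P}"

type_synonym ('s, 'a) pstate = "('s, 'a) lpts \<times> 's"

text \<open>The family of partial functions [s] : G \<rightharpoonup> Dist(G); value with the convention
  [s](g')(g) = 0 when [s](g') is undefined.\<close>
definition pval :: "('x \<Rightarrow> 'x set \<Rightarrow> ('x set \<Rightarrow> rat) option) \<Rightarrow> 'x \<Rightarrow> 'x set \<Rightarrow> 'x set \<Rightarrow> rat" where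
  "pval part s g' g = (case part s g' of None \<Rightarrow> 0 | Some \<mu> \<Rightarrow> \<mu> g)"

definition stochastic_partition ::
  "('s, 'a) lpts set \<Rightarrow> ('s, 'a) pstate set set \<Rightarrow>
   (('s, 'a) pstate \<Rightarrow> ('s, 'a) pstate set \<Rightarrow> (('s, 'a) pstate set \<Rightarrow> rat) option) \<Rightarrow> bool" where
  "stochastic_partition \<P> G part \<longleftrightarrow>
     G \<subseteq> Pow (SP \<P>) \<and> \<Union> G = SP \<P> \<and>
     (\<forall>s \<in> SP \<P>. \<forall>g \<mu>. part s g = Some \<mu> \<longrightarrow> g \<in> G \<and> is_dist G \<mu>) \<and>
     (\<exists>g0 \<in> G. \<forall>P \<in> \<P>. \<forall>g \<in> G. part (P, s0 P) g = Some (dirac g0)) \<and>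
     (\<forall>P \<in> \<P>. \<forall>t \<in> st P - {s0 P}. \<forall>g \<in> G.
        part (P, t) g \<noteq> None \<longleftrightarrow> (\<exists>g' \<in> G. pval part (P, parent P t) g' g > 0)) \<and>
     (\<forall>s \<in> SP \<P>. \<forall>g \<in> G. s \<in> g \<longleftrightarrow> (\<exists>g' \<in> G. pval part s g' g > 0))"

definition quotient ::
  "('s, 'a) lpts set \<Rightarrow> ('s, 'a) pstate set set \<Rightarrow>
   (('s, 'a) pstate \<Rightarrow> ('s, 'a) pstate set \<Rightarrow> (('s, 'a) pstate set \<Rightarrow> rat) option) \<Rightarrow>
   (('s, 'a) pstate set, 'a) lpts" where
  "quotient \<P> G part =
     \<lparr> st = G,
       s0 = (SOME g0. g0 \<in> G \<and> (\<forall>P \<in> \<P>. \<forall>g \<in> G. part (P, s0 P) g = Some (dirac g0))),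
       act = (\<Union>P \<in> \<P>. act P),
       tr = {(g, a, \<mu>). g \<in> G \<and>
               (\<exists>P \<in> \<P>. \<exists>s \<mu>p. (s, a, \<mu>p) \<in> tr P \<and> (P, s) \<in> g \<and>
                  (\<forall>g' \<in> G. \<mu> g' =
                     (\<Sum>s' \<in> g'. pval part s' g g' * (if fst s' = P then \<mu>p (snd s') else 0)))) \<and>
               (\<forall>g'. g' \<notin> G \<longrightarrow> \<mu> g' = 0)} \<rparr>"

end

theory Submission
  imports Defs
begin

text \<open>Each quotient transition lifts a tree transition s --a--> mu_p with s in the
  class g. Exchanging the two sums, its total mass is the sum over t of
  mu_p(t) * (sum over g' of [t](g)(g')). Every t with mu_p(t) > 0 has parent s, and
  s in g means that [s] sends some class to g with positive probability; by the
  definedness condition of a stochastic partition, [t](g) is then a distribution,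
  so the inner sum is 1 and the total mass is the sum of mu_p, i.e. 1.\<close>

lemma is_lpts_trD:
  assumes "is_lpts L" "(s, a, \<mu>) \<in> tr L"
  shows "s \<in> st L" "a \<in> act L" "is_dist (st L) \<mu>"
proof -
  have "\<forall>(s, a, \<mu>) \<in> tr L. s \<in> st L \<and> a \<in> act L \<and> is_dist (st L) \<mu>"
    using assms(1) unfolding is_lpts_def by simp
  from bspec[OF this assms(2)] show "s \<in> st L" "a \<in> act L" "is_dist (st L) \<mu>"
    by simp_all
qed

lemma stochastic_treeD:
  assumes "stochastic_tree L"
  shows stochastic_tree_lpts: "is_lpts L"
    and stochastic_tree_start: "\<And>s a \<mu>. (s, a, \<mu>) \<in> tr L \<Longrightarrow> \<not> \<mu> (s0 L) > 0"
    and stochastic_tree_unique: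
      "\<And>t. t \<in> st L - {s0 L} \<Longrightarrow> \<exists>!x. x \<in> tr L \<and> snd (snd x) t > 0"
proof -
  have "is_lpts L" and start: "\<forall>(s, a, \<mu>) \<in> tr L. \<not> \<mu> (s0 L) > 0"
    and unique: "\<forall>t \<in> st L - {s0 L}. \<exists>!x. x \<in> tr L \<and> snd (snd x) t > 0"
    using assms unfolding stochastic_tree_def by simp_all
  then show "is_lpts L" "\<And>t. t \<in> st L - {s0 L} \<Longrightarrow> \<exists>!x. x \<in> tr L \<and> snd (snd x) t > 0"
    by simp_all
  show "\<not> \<mu> (s0 L) > 0" if "(s, a, \<mu>) \<in> tr L" for s a \<mu>
    using bspec[OF start that] by simp
qed

lemma stochastic_tree_parent:
  assumes "stochastic_tree L" "(s, a, \<mu>) \<in> tr L" "\<mu> t > 0" "t \<in> st L"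
  shows "t \<noteq> s0 L" "parent L t = s"
proof -
  show t: "t \<noteq> s0 L"
    using stochastic_tree_start[OF assms(1,2)] assms(3) by metis
  have "(THE x. x \<in> tr L \<and> snd (snd x) t > 0) = (s, a, \<mu>)"
    using stochastic_tree_unique[OF assms(1)] assms(2-4) t by (intro the1_equality) auto
  then show "parent L t = s"
    by (simp add: parent_def)
qed

lemma finite_SP:
  assumes "finite \<P>" "\<forall>P \<in> \<P>. is_lpts P"
  shows "finite (SP \<P>)"
proof -
  have "SP \<P> = (SIGMA P:\<P>. st P)"
    unfolding SP_def by auto
  with assms show ?thesis
    unfolding is_lpts_def by auto
qed

lemma stochastic_partitionD:
  assumes "stochastic_partition \<P> G part"
  shows stochastic_partition_subset: "G \<subseteq> Pow (SP \<P>)"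
    and stochastic_partition_dist:
      "\<And>s g \<mu>. s \<in> SP \<P> \<Longrightarrow> part s g = Some \<mu> \<Longrightarrow> g \<in> G \<and> is_dist G \<mu>"
    and stochastic_partition_start:
      "\<exists>g0 \<in> G. \<forall>P \<in> \<P>. \<forall>g \<in> G. part (P, s0 P) g = Some (dirac g0)"
    and stochastic_partition_defined:
      "\<And>P t g. P \<in> \<P> \<Longrightarrow> t \<in> st P - {s0 P} \<Longrightarrow> g \<in> G \<Longrightarrow>
         part (P, t) g \<noteq> None \<longleftrightarrow> (\<exists>g' \<in> G. pval part (P, parent P t) g' g > 0)"
    and stochastic_partition_mem:
      "\<And>s g. s \<in> SP \<P> \<Longrightarrow> g \<in> G \<Longrightarrow> s \<in> g \<longleftrightarrow> (\<exists>g' \<in> G. pval part s g' g > 0)"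
  using assms unfolding stochastic_partition_def by - (elim conjE, (assumption | metis))+

lemma pval_nonneg:
  assumes "stochastic_partition \<P> G part" "s \<in> SP \<P>"
  shows "0 \<le> pval part s g' g"
  using stochastic_partition_dist[OF assms] unfolding pval_def is_dist_def
  by (cases "part s g'") auto

lemma pval_eq_0_if_notin:
  assumes "stochastic_partition \<P> G part" "s \<in> SP \<P>" "g \<in> G" "s \<notin> g"
  shows "pval part s g' g = 0"
proof (cases "g' \<in> G")
  case True
  with stochastic_partition_mem[OF assms(1-3)] assms(4) have "\<not> pval part s g' g > 0"
    by blast
  with pval_nonneg[OF assms(1,2), of g' g] show ?thesis
    by linarith
next
  case False
  with stochastic_partition_dist[OF assms(1,2)] show ?thesis
    unfolding pval_def by (cases "part s g'") auto
qed

lemma sum_pval_eq_1: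
  assumes "stochastic_partition \<P> G part" "s \<in> SP \<P>" "part s g' \<noteq> None"
  shows "(\<Sum>g\<in>G. pval part s g' g) = 1"
  using assms stochastic_partition_dist[OF assms(1,2)]
  unfolding pval_def is_dist_def by auto

lemma part_child_defined:
  assumes "stochastic_partition \<P> G part" "P \<in> \<P>" "stochastic_tree P"
    and "(s, a, \<mu>p) \<in> tr P" "(P, s) \<in> g" "g \<in> G" "t \<in> st P" "\<mu>p t > 0"
  shows "part (P, t) g \<noteq> None"
proof -
  have "(P, s) \<in> SP \<P>"
    using is_lpts_trD(1)[OF stochastic_tree_lpts[OF assms(3)] assms(4)] assms(2)
    unfolding SP_def by blast
  with stochastic_partition_mem[OF assms(1)] assms(5,6)
  have "\<exists>g' \<in> G. pval part (P, parent P t) g' g > 0"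
    using stochastic_tree_parent(2)[OF assms(3,4,8,7)] by simp
  with stochastic_partition_defined[OF assms(1,2) _ assms(6)] assms(7)
    stochastic_tree_parent(1)[OF assms(3,4,8,7)]
  show ?thesis
    by blast
qed

definition lift_dist ::
  "(('s, 'a) pstate \<Rightarrow> ('s, 'a) pstate set \<Rightarrow> (('s, 'a) pstate set \<Rightarrow> rat) option) \<Rightarrow>
   ('s, 'a) pstate set \<Rightarrow> ('s, 'a) lpts \<Rightarrow> ('s \<Rightarrow> rat) \<Rightarrow> ('s, 'a) pstate set \<Rightarrow> rat" where
  "lift_dist part g P \<mu>p g' =
     (\<Sum>s' \<in> g'. pval part s' g g' * (if fst s' = P then \<mu>p (snd s') else 0))"

lemma lift_dist_nonneg:
  assumes "stochastic_partition \<P> G part" "g' \<in> G" "is_dist (st P) \<mu>p"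
  shows "0 \<le> lift_dist part g P \<mu>p g'"
proof -
  have "g' \<subseteq> SP \<P>"
    using stochastic_partition_subset[OF assms(1)] assms(2) by blast
  with assms(3) pval_nonneg[OF assms(1)] show ?thesis
    unfolding lift_dist_def is_dist_def by (auto intro!: sum_nonneg)
qed

lemma sum_lift_dist_swap:
  assumes "stochastic_partition \<P> G part" "finite (SP \<P>)" "P \<in> \<P>" "g \<in> G"
  shows "(\<Sum>g'\<in>G. lift_dist part g P \<mu>p g') =
         (\<Sum>t\<in>st P. (\<Sum>g'\<in>G. pval part (P, t) g g') * \<mu>p t)"
proof -
  define w where "w s' = (if fst s' = P then \<mu>p (snd s') else 0)" for s'
  have G_sub: "g' \<subseteq> SP \<P>" if "g' \<in> G" for g'
    using stochastic_partition_subset[OF assms(1)] that by blast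
  have "(\<Sum>g'\<in>G. lift_dist part g P \<mu>p g') = (\<Sum>g'\<in>G. \<Sum>s'\<in>SP \<P>. pval part s' g g' * w s')"
    unfolding lift_dist_def w_def
    using assms(1,2) G_sub pval_eq_0_if_notin
    by (intro sum.cong refl sum.mono_neutral_left) auto
  also have "\<dots> = (\<Sum>s'\<in>SP \<P>. (\<Sum>g'\<in>G. pval part s' g g') * w s')"
    by (subst sum.swap) (simp add: sum_distrib_right)
  also have "\<dots> = (\<Sum>s'\<in>Pair P ` st P. (\<Sum>g'\<in>G. pval part s' g g') * w s')"
    using assms(2,3) by (intro sum.mono_neutral_right) (auto simp: SP_def w_def)
  also have "\<dots> = (\<Sum>t\<in>st P. (\<Sum>g'\<in>G. pval part (P, t) g g') * \<mu>p t)"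
    by (subst sum.reindex) (auto simp: inj_on_def w_def)
  finally show ?thesis .
qed

lemma sum_lift_dist_eq_1:
  assumes "stochastic_partition \<P> G part" "finite (SP \<P>)" "P \<in> \<P>" "stochastic_tree P"
    and "(s, a, \<mu>p) \<in> tr P" "(P, s) \<in> g" "g \<in> G"
  shows "(\<Sum>g'\<in>G. lift_dist part g P \<mu>p g') = 1"
proof -
  have dist: "is_dist (st P) \<mu>p"
    using is_lpts_trD(3)[OF stochastic_tree_lpts[OF assms(4)] assms(5)] .
  have child: "(\<Sum>g'\<in>G. pval part (P, t) g g') * \<mu>p t = \<mu>p t" if t: "t \<in> st P" for t
  proof (cases "\<mu>p t > 0")
    case True
    have "(P, t) \<in> SP \<P>"
      using assms(3) t unfolding SP_def by blast
    with True show ?thesis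
      using sum_pval_eq_1[OF assms(1)] part_child_defined[OF assms(1,3,4,5,6,7) t] by simp
  next
    case False
    with dist have "\<mu>p t = 0"
      unfolding is_dist_def by (metis order_le_less)
    then show ?thesis
      by simp
  qed
  have "(\<Sum>g'\<in>G. lift_dist part g P \<mu>p g') =
        (\<Sum>t\<in>st P. (\<Sum>g'\<in>G. pval part (P, t) g g') * \<mu>p t)"
    by (rule sum_lift_dist_swap[OF assms(1,2,3,7)])
  also have "\<dots> = sum \<mu>p (st P)"
    using child by (rule sum.cong[OF refl])
  also have "\<dots> = 1"
    using dist unfolding is_dist_def by simp
  finally show ?thesis .
qed

lemma tr_quotient_iff:
  "(g, a, \<mu>) \<in> tr (quotient \<P> G part) \<longleftrightarrow>
     g \<in> G \<and>
     (\<exists>P \<in> \<P>. \<exists>s \<mu>p. (s, a, \<mu>p) \<in> tr P \<and> (P, s) \<in> g \<and>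
        (\<forall>g' \<in> G. \<mu> g' = lift_dist part g P \<mu>p g')) \<and>
     (\<forall>g'. g' \<notin> G \<longrightarrow> \<mu> g' = 0)"
  by (simp add: quotient_def lift_dist_def)

lemma tr_quotientE:
  assumes "(g, a, \<mu>) \<in> tr (quotient \<P> G part)"
  obtains P s \<mu>p where "g \<in> G" "P \<in> \<P>" "(s, a, \<mu>p) \<in> tr P" "(P, s) \<in> g"
    "\<mu> = (\<lambda>g'. if g' \<in> G then lift_dist part g P \<mu>p g' else 0)"
proof -
  from assms obtain P s \<mu>p where "g \<in> G" "P \<in> \<P>" "(s, a, \<mu>p) \<in> tr P" "(P, s) \<in> g"
      and "\<forall>g' \<in> G. \<mu> g' = lift_dist part g P \<mu>p g'" "\<forall>g'. g' \<notin> G \<longrightarrow> \<mu> g' = 0"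
    unfolding tr_quotient_iff by blast
  then show ?thesis
    by (intro that) auto
qed

lemma st_quotient [simp]: "st (quotient \<P> G part) = G"
  and act_quotient [simp]: "act (quotient \<P> G part) = (\<Union>P \<in> \<P>. act P)"
  by (simp_all add: quotient_def)

lemma s0_quotient_in:
  assumes "stochastic_partition \<P> G part"
  shows "s0 (quotient \<P> G part) \<in> G"
proof -
  have "\<exists>g0. g0 \<in> G \<and> (\<forall>P \<in> \<P>. \<forall>g \<in> G. part (P, s0 P) g = Some (dirac g0))"
    using stochastic_partition_start[OF assms] by blast
  then show ?thesis
    unfolding quotient_def lpts.simps by (rule someI2_ex) blast
qed

lemma finite_tr_quotient:
  fixes \<P> :: "('s, 'a) lpts set"
  assumes "finite \<P>" "\<forall>P \<in> \<P>. is_lpts P" "finite G"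
  shows "finite (tr (quotient \<P> G part))"
proof -
  define lift where "lift = (\<lambda>(g, P, s :: 's, a :: 'a, \<mu>p).
    (g, a, \<lambda>g'. if g' \<in> G then lift_dist part g P \<mu>p g' else 0))"
  have "tr (quotient \<P> G part) \<subseteq> lift ` (G \<times> (SIGMA P:\<P>. tr P))"
  proof clarify
    fix g a \<mu> assume "(g, a, \<mu>) \<in> tr (quotient \<P> G part)"
    then show "(g, a, \<mu>) \<in> lift ` (G \<times> (SIGMA P:\<P>. tr P))"
    proof (rule tr_quotientE)
      fix P s \<mu>p
      assume "g \<in> G" "P \<in> \<P>" "(s, a, \<mu>p) \<in> tr P"
        and "\<mu> = (\<lambda>g'. if g' \<in> G then lift_dist part g P \<mu>p g' else 0)"
      then show ?thesis
        unfolding lift_def by (intro image_eqI[where x = "(g, P, s, a, \<mu>p)"]) auto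
    qed
  qed
  moreover have "finite (G \<times> (SIGMA P:\<P>. tr P))"
    using assms unfolding is_lpts_def by auto
  ultimately show ?thesis
    by (meson finite_imageI finite_subset)
qed

lemma tr_quotient_is_dist:
  assumes "stochastic_partition \<P> G part" "finite (SP \<P>)" "\<forall>P \<in> \<P>. stochastic_tree P"
    and "(g, a, \<mu>) \<in> tr (quotient \<P> G part)"
  shows "is_dist G \<mu>"
  using assms(4)
proof (rule tr_quotientE)
  fix P s \<mu>p
  assume "g \<in> G" and P: "P \<in> \<P>" and tr: "(s, a, \<mu>p) \<in> tr P" and "(P, s) \<in> g"
    and \<mu>: "\<mu> = (\<lambda>g'. if g' \<in> G then lift_dist part g P \<mu>p g' else 0)"
  then have "sum \<mu> G = 1"
    using sum_lift_dist_eq_1[OF assms(1,2) P] assms(3) by simp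
  moreover have "is_dist (st P) \<mu>p"
    using is_lpts_trD(3)[OF stochastic_tree_lpts tr] assms(3) P by blast
  then have "0 \<le> \<mu> g'" for g'
    using \<mu> lift_dist_nonneg[OF assms(1)] by simp
  ultimately show ?thesis
    using \<mu> unfolding is_dist_def by simp
qed

theorem lemma8:
  fixes \<P> :: "('s, 'a) lpts set"
    and G :: "('s, 'a) pstate set set"
    and part :: "('s, 'a) pstate \<Rightarrow> ('s, 'a) pstate set \<Rightarrow> (('s, 'a) pstate set \<Rightarrow> rat) option"
  assumes "finite \<P>" and "\<P> \<noteq> {}"
    and "\<forall>P \<in> \<P>. stochastic_tree P"
    and "stochastic_partition \<P> G part"
  shows "is_lpts (quotient \<P> G part) \<and>
         (\<forall>(g, a, \<mu>) \<in> tr (quotient \<P> G part). is_dist G \<mu>)"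
proof -
  have lpts: "\<forall>P \<in> \<P>. is_lpts P"
    using assms(3) stochastic_tree_lpts by blast
  have finSP: "finite (SP \<P>)"
    using finite_SP[OF assms(1) lpts] .
  then have finG: "finite G"
    using stochastic_partition_subset[OF assms(4)] by (meson finite_Pow_iff finite_subset)
  have dist: "\<forall>(g, a, \<mu>) \<in> tr (quotient \<P> G part). is_dist G \<mu>"
    using tr_quotient_is_dist[OF assms(4) finSP assms(3)] by blast
  have "\<forall>(g, a, \<mu>) \<in> tr (quotient \<P> G part). g \<in> G \<and> a \<in> (\<Union>P \<in> \<P>. act P)"
    using is_lpts_trD(2) lpts by (fastforce elim: tr_quotientE)
  with dist finG s0_quotient_in[OF assms(4)] assms(1) lpts finite_tr_quotient[OF assms(1) lpts finG]
  have "is_lpts (quotient \<P> G part)"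
    unfolding is_lpts_def by auto
  with dist show ?thesis
    by blast
qed

end
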